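(* Let $\mathcal G$ be a CFG. Suppose there exist: (1) an inductive invariant $\mathsf{Inv}$ containing the initial state; (2) a supermartingale function $V:\mathsf{Inv}\to\mathbb R$ on $\mathsf{Inv}$ with $V(\sigma_\bot)=0$ and $V(\sigma)>0$ for every non-terminal $\sigma\in\mathsf{Inv}$; (3) a function $U:\mathsf{Inv}\to\mathbb N$ with $U(\sigma_\bot)=0$ such that: (a) at every non-terminal assignment or nondeterministic state $\sigma\in\mathsf{Inv}$, $U(\sigma)>U(\sigma')$ for every successor $\sigma'$; (b) for every $r\in\mathbb R$, letting $V_{\le r}=\{\sigma\in\mathsf{Inv}: V(\sigma)\le r\}$: (i) $U$ is bounded on $V_{\le r}$, and (ii) there is $\epsilon_r>0$ such that for every non-terminal probabilistic state $(l,\mathbf x)\in V_{\le r}$, $\sum \mathsf{Pr}(l,l')[\mathbf x]>\epsilon_r$, where the sum ranges over the successors $(l',\mathbf x')$ with $U(l',\mathbf x')<U(l,\mathbf x)$. Then $\mathcal G$ is almost-surely terminating, i.e. $\Pr_{term}(\mathcal G)=1$.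
   Context: A probabilistic control flow graph (CFG) is a tuple $\mathcal G=(L,V,l_{init},\mathbf x_{init},\mapsto,G,\mathsf{Pr},\mathsf{Upd})$. $L$ is a finite set of locations, partitioned into assignment, nondeterministic and probabilistic locations. The variables in $V$ range over $\mathbb Q$. $(l_{init},\mathbf x_{init})$ is the initial state. There are finitely many guarded transitions. At probabilistic locations, each outgoing transition $(l,l')$ carries a probability expression $\mathsf{Pr}(l,l')$ whose values are positive and, over the enabled transitions, sum to $1$. Assignment locations have at most one outgoing transition, carrying an update of one variable by an arithmetic expression. A state is a pair $(l,\mathbf x)$, and successors are given by enabled transitions. Every state has at least one, and finitely many, successors. A scheduler resolves nondeterministic choices as a function of the finite path so far, and each scheduler $\mathfrak s$ induces a probability measure $\mathbb P_{\mathfrak s}$ on runs. The terminal state is $\sigma_\bot=(l_{out},\mathbf 0)$. $\Pr_{term}(\mathcal G)=\inf_{\mathfrak s}\mathbb P_{\mathfrak s}[\text{run visits }\sigma_\bot]$. An inductive invariant is a set of states closed under taking successors. A function $f:\mathsf{Inv}\to\mathbb R$ is a supermartingale function on $\mathsf{Inv}$ if, for every non-terminal $(l,\mathbf x)\in\mathsf{Inv}$: - if the state is an assignment or nondeterministic state, then $f(l,\mathbf x)\ge f(\sigma')$ for every successor $\sigma'$; - if it is a probabilistic state, then $f(l,\mathbf x)\ge\sum\mathsf{Pr}(l,l')[\mathbf x]\,f(l',\mathbf x')$, where the sum is over its successors. *)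

theory Defs
  imports Complex_Main
begin

datatype lkind = Assign | NonDet | Prob

text \<open>A CFG: locations (partitioned by kind), the variables are the elements of the
  type 'v (valuations 'v => rat), initial location/valuation, output location,
  transitions (pairs of locations), guards, probability expressions and updates
  (assignment transitions update one variable by an expression).\<close>
record ('l, 'v) cfg =
  locs   :: "'l set"
  kind   :: "'l \<Rightarrow> lkind"
  l_init :: 'l
  x_init :: "'v \<Rightarrow> rat"
  l_out  :: 'l
  trans  :: "('l \<times> 'l) set"
  guard  :: "'l \<times> 'l \<Rightarrow> ('v \<Rightarrow> rat) \<Rightarrow> bool"
  prb    :: "'l \<times> 'l \<Rightarrow> ('v \<Rightarrow> rat) \<Rightarrow> real"
  upd    :: "'l \<times> 'l \<Rightarrow> 'v \<times> (('v \<Rightarrow> rat) \<Rightarrow> rat)"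

type_synonym ('l, 'v) state = "'l \<times> ('v \<Rightarrow> rat)"

definition states :: "('l, 'v) cfg \<Rightarrow> ('l, 'v) state set" where
  "states G = {\<sigma>. fst \<sigma> \<in> locs G}"

definition term_state :: "('l, 'v) cfg \<Rightarrow> ('l, 'v) state" where
  "term_state G = (l_out G, (\<lambda>_. 0))"

definition enabled :: "('l, 'v) cfg \<Rightarrow> 'l \<Rightarrow> ('v \<Rightarrow> rat) \<Rightarrow> ('l \<times> 'l) set" where
  "enabled G l x = {t \<in> trans G. fst t = l \<and> guard G t x}"

definition post :: "('l, 'v) cfg \<Rightarrow> 'l \<times> 'l \<Rightarrow> ('v \<Rightarrow> rat) \<Rightarrow> ('l, 'v) state" where
  "post G t x = (snd t,
     (if kind G (fst t) = Assign then (case upd G t of (v, e) \<Rightarrow> x(v := e x)) else x))"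

definition succs :: "('l, 'v) cfg \<Rightarrow> ('l, 'v) state \<Rightarrow> ('l, 'v) state set" where
  "succs G \<sigma> = (\<lambda>t. post G t (snd \<sigma>)) ` enabled G (fst \<sigma>) (snd \<sigma>)"

definition wf_cfg :: "('l, 'v) cfg \<Rightarrow> bool" where
  "wf_cfg G \<longleftrightarrow>
     finite (locs G) \<and> trans G \<subseteq> locs G \<times> locs G \<and>
     l_init G \<in> locs G \<and> l_out G \<in> locs G \<and>
     (\<forall>l\<in>locs G. kind G l = Assign \<longrightarrow> card {t \<in> trans G. fst t = l} \<le> 1) \<and>
     (\<forall>l\<in>locs G. kind G l = Prob \<longrightarrow>
        (\<forall>t\<in>trans G. fst t = l \<longrightarrow> (\<forall>x. prb G t x > 0)) \<and>
        (\<forall>x. (\<Sum>t\<in>enabled G l x. prb G t x) = 1)) \<and>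
     (\<forall>l\<in>locs G. \<forall>x. enabled G l x \<noteq> {})"

text \<open>Schedulers: deterministic, history dependent (finite path, last element is the
  current state), choosing a successor at nondeterministic states.\<close>
type_synonym ('l, 'v) sched = "('l, 'v) state list \<Rightarrow> ('l, 'v) state"

definition valid_sched :: "('l, 'v) cfg \<Rightarrow> ('l, 'v) sched \<Rightarrow> bool" where
  "valid_sched G s \<longleftrightarrow>
     (\<forall>\<pi>. \<pi> \<noteq> [] \<and> last \<pi> \<in> states G \<and> kind G (fst (last \<pi>)) = NonDet \<longrightarrow>
          s \<pi> \<in> succs G (last \<pi>))"

text \<open>reach G s n \<pi>: probability (under the measure induced by s) that a run
  extending the finite path \<pi> visits the terminal state within n further steps
  (or already has, at the last state).\<close>
primrec reach :: "('l, 'v) cfg \<Rightarrow> ('l, 'v) sched \<Rightarrow> nat \<Rightarrow> ('l, 'v) state list \<Rightarrow> real" where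
  "reach G s 0 \<pi> = (if last \<pi> = term_state G then 1 else 0)"
| "reach G s (Suc n) \<pi> =
     (if last \<pi> = term_state G then 1 else
       (case last \<pi> of (l, x) \<Rightarrow>
         (case kind G l of
            NonDet \<Rightarrow> reach G s n (\<pi> @ [s \<pi>])
          | Assign \<Rightarrow> (\<Sum>t\<in>enabled G l x. reach G s n (\<pi> @ [post G t x]))
          | Prob \<Rightarrow> (\<Sum>t\<in>enabled G l x. prb G t x * reach G s n (\<pi> @ [post G t x])))))"

text \<open>P_s[run visits the terminal state] = limit (sup) of the finite-horizon probabilities.\<close>
definition term_prob_sched :: "('l, 'v) cfg \<Rightarrow> ('l, 'v) sched \<Rightarrow> real" where
  "term_prob_sched G s = (SUP n. reach G s n [(l_init G, x_init G)])"

definition Pr_term :: "('l, 'v) cfg \<Rightarrow> real" where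
  "Pr_term G = (INF s \<in> {s. valid_sched G s}. term_prob_sched G s)"

definition inductive_invariant :: "('l, 'v) cfg \<Rightarrow> ('l, 'v) state set \<Rightarrow> bool" where
  "inductive_invariant G I \<longleftrightarrow> I \<subseteq> states G \<and> (\<forall>\<sigma>\<in>I. succs G \<sigma> \<subseteq> I)"

definition supermartingale :: "('l, 'v) cfg \<Rightarrow> ('l, 'v) state set \<Rightarrow> (('l, 'v) state \<Rightarrow> real) \<Rightarrow> bool" where
  "supermartingale G I f \<longleftrightarrow>
     (\<forall>\<sigma>\<in>I. \<sigma> \<noteq> term_state G \<longrightarrow>
        (if kind G (fst \<sigma>) = Prob
         then f \<sigma> \<ge> (\<Sum>t\<in>enabled G (fst \<sigma>) (snd \<sigma>). prb G t (snd \<sigma>) * f (post G t (snd \<sigma>)))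
         else (\<forall>\<sigma>'\<in>succs G \<sigma>. f \<sigma> \<ge> f \<sigma>')))"

end

theory Submission
  imports Defs
begin

(* Call a state stopped at level r if it is terminal or V exceeds r. For every scheduler, the
   probability of hitting a set T within n steps is at least min_reach G T n, the value iteration
   of the reachability game in which the scheduler tries to avoid T. Below level r the
   ranking U is bounded by some B, and every step decreases U surely (assignment and
   nondeterministic states) or with probability at least eps (probabilistic states); so the stopped
   states are hit within B steps with probability at least eps^B from everywhere, and restarting
   after each block of B steps gives probability at least 1 - (1 - eps^B)^k within kB steps. Since
   V is a nonnegative supermartingale vanishing at the terminal state, stopping through V > r
   instead of terminating has probability at most V(init)/r. Letting k and r grow, termination has
   probability 1 under every scheduler. *)

lemma finite_enabled: "wf_cfg G \<Longrightarrow> finite (enabled G l x)"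
  unfolding wf_cfg_def enabled_def
  by (auto intro: finite_subset[of _ "locs G \<times> locs G"])

lemma enabled_nonempty: "wf_cfg G \<Longrightarrow> l \<in> locs G \<Longrightarrow> enabled G l x \<noteq> {}"
  unfolding wf_cfg_def by auto

lemma enabled_in_locs: "wf_cfg G \<Longrightarrow> t \<in> enabled G l x \<Longrightarrow> l \<in> locs G"
  unfolding wf_cfg_def enabled_def by auto

lemma prb_pos: "wf_cfg G \<Longrightarrow> kind G l = Prob \<Longrightarrow> t \<in> enabled G l x \<Longrightarrow> 0 < prb G t x"
  using enabled_in_locs[of G t l x] unfolding wf_cfg_def enabled_def by auto

lemma sum_prb_eq_1:
  "wf_cfg G \<Longrightarrow> l \<in> locs G \<Longrightarrow> kind G l = Prob \<Longrightarrow> (\<Sum>t\<in>enabled G l x. prb G t x) = 1"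
  unfolding wf_cfg_def by auto

lemma enabled_Assign_singleton:
  assumes wf: "wf_cfg G" and l: "l \<in> locs G" and Assign: "kind G l = Assign"
  obtains t where "enabled G l x = {t}"
proof -
  have "finite {t \<in> trans G. fst t = l}"
    using wf unfolding wf_cfg_def by (auto intro: finite_subset[of _ "locs G \<times> locs G"])
  moreover have "card {t \<in> trans G. fst t = l} \<le> 1"
    using wf l Assign unfolding wf_cfg_def by auto
  ultimately have "\<forall>t1\<in>enabled G l x. \<forall>t2\<in>enabled G l x. t1 = t2"
    unfolding enabled_def by (auto simp: card_le_Suc0_iff_eq)
  with enabled_nonempty[OF wf l] show thesis
    using that by blast
qed

lemma finite_succs: "wf_cfg G \<Longrightarrow> finite (succs G \<sigma>)"
  unfolding succs_def by (simp add: finite_enabled)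

lemma succs_nonempty: "wf_cfg G \<Longrightarrow> \<sigma> \<in> states G \<Longrightarrow> succs G \<sigma> \<noteq> {}"
  unfolding succs_def states_def by (simp add: enabled_nonempty)

lemma post_in_succs: "t \<in> enabled G (fst \<sigma>) (snd \<sigma>) \<Longrightarrow> post G t (snd \<sigma>) \<in> succs G \<sigma>"
  unfolding succs_def by auto

lemma valid_sched_exists:
  assumes wf: "wf_cfg G"
  shows "\<exists>s. valid_sched G s"
proof -
  have "valid_sched G (\<lambda>\<pi>. SOME \<sigma>'. \<sigma>' \<in> succs G (last \<pi>))"
    unfolding valid_sched_def using succs_nonempty[OF wf] by (auto simp: some_in_eq)
  then show ?thesis by blast
qed

definition expectation ::
  "('l, 'v) cfg \<Rightarrow> (('l, 'v) state \<Rightarrow> real) \<Rightarrow> ('l, 'v) state \<Rightarrow> real" where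
  "expectation G w \<sigma> =
     (\<Sum>t\<in>enabled G (fst \<sigma>) (snd \<sigma>). prb G t (snd \<sigma>) * w (post G t (snd \<sigma>)))"

lemma expectation_lincomb:
  "expectation G (\<lambda>\<sigma>'. a * f \<sigma>' + b * g \<sigma>') \<sigma> = a * expectation G f \<sigma> + b * expectation G g \<sigma>"
  unfolding expectation_def by (simp add: sum.distrib sum_distrib_left algebra_simps)

lemma expectation_const:
  "wf_cfg G \<Longrightarrow> fst \<sigma> \<in> locs G \<Longrightarrow> kind G (fst \<sigma>) = Prob \<Longrightarrow> expectation G (\<lambda>_. c) \<sigma> = c"
  unfolding expectation_def by (simp add: sum_distrib_right[symmetric] sum_prb_eq_1)

lemma expectation_mono:
  assumes "wf_cfg G" "kind G (fst \<sigma>) = Prob" "\<And>\<sigma>'. \<sigma>' \<in> succs G \<sigma> \<Longrightarrow> f \<sigma>' \<le> g \<sigma>'"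
  shows "expectation G f \<sigma> \<le> expectation G g \<sigma>"
  unfolding expectation_def
proof (rule sum_mono)
  fix t assume t: "t \<in> enabled G (fst \<sigma>) (snd \<sigma>)"
  show "prb G t (snd \<sigma>) * f (post G t (snd \<sigma>)) \<le> prb G t (snd \<sigma>) * g (post G t (snd \<sigma>))"
    using assms(3)[OF post_in_succs[OF t]] prb_pos[OF assms(1,2) t] by (intro mult_left_mono) auto
qed

lemma reach_term: "last \<pi> = term_state G \<Longrightarrow> reach G s n \<pi> = 1"
  by (cases n) simp_all

lemma reach_Suc_Prob:
  "last \<pi> \<noteq> term_state G \<Longrightarrow> kind G (fst (last \<pi>)) = Prob \<Longrightarrow>
   reach G s (Suc n) \<pi> = expectation G (\<lambda>\<sigma>'. reach G s n (\<pi> @ [\<sigma>'])) (last \<pi>)"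
  by (cases "last \<pi>") (simp add: expectation_def)

lemma reach_Suc_not_Prob:
  assumes wf: "wf_cfg G" and s: "valid_sched G s" and \<pi>: "\<pi> \<noteq> []" "last \<pi> \<in> states G"
    and nonterm: "last \<pi> \<noteq> term_state G" and kind: "kind G (fst (last \<pi>)) \<noteq> Prob"
  obtains \<sigma>' where "\<sigma>' \<in> succs G (last \<pi>)" "reach G s (Suc n) \<pi> = reach G s n (\<pi> @ [\<sigma>'])"
proof (cases "kind G (fst (last \<pi>))")
  case NonDet
  then show thesis
    using that[of "s \<pi>"] s \<pi> nonterm unfolding valid_sched_def by (cases "last \<pi>") auto
next
  case Assign
  obtain l x where lx: "last \<pi> = (l, x)" by fastforce
  with \<pi> obtain t where "enabled G l x = {t}"
    using enabled_Assign_singleton[OF wf _ Assign] unfolding states_def by auto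
  then show thesis
    using that[of "post G t x"] lx nonterm Assign by (simp add: succs_def)
qed (use kind in simp)

definition min_reach_step ::
  "('l, 'v) cfg \<Rightarrow> ('l, 'v) state set \<Rightarrow> (('l, 'v) state \<Rightarrow> real) \<Rightarrow> ('l, 'v) state \<Rightarrow> real" where
  "min_reach_step G T w \<sigma> =
     (if \<sigma> \<in> T then 1
      else if kind G (fst \<sigma>) = Prob then expectation G w \<sigma>
      else Min (w ` succs G \<sigma>))"

definition min_reach :: "('l, 'v) cfg \<Rightarrow> ('l, 'v) state set \<Rightarrow> nat \<Rightarrow> ('l, 'v) state \<Rightarrow> real" where
  "min_reach G T n = (min_reach_step G T ^^ n) (\<lambda>\<sigma>. of_bool (\<sigma> \<in> T))"

lemma min_reach_0: "min_reach G T 0 \<sigma> = of_bool (\<sigma> \<in> T)"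
  by (simp add: min_reach_def)

lemma min_reach_Suc: "min_reach G T (Suc n) = min_reach_step G T (min_reach G T n)"
  by (simp add: min_reach_def)

lemma min_reach_add: "min_reach G T (m + n) = (min_reach_step G T ^^ m) (min_reach G T n)"
  by (simp add: min_reach_def funpow_add)

lemma min_reach_target: "\<sigma> \<in> T \<Longrightarrow> min_reach G T n \<sigma> = 1"
  by (cases n) (simp_all add: min_reach_def min_reach_step_def)

definition stop_set :: "('l, 'v) cfg \<Rightarrow> (('l, 'v) state \<Rightarrow> real) \<Rightarrow> real \<Rightarrow> ('l, 'v) state set" where
  "stop_set G V r = insert (term_state G) {\<sigma>. r < V \<sigma>}"

locale cfg_invariant =
  fixes G :: "('l, 'v) cfg" and Inv :: "('l, 'v) state set"
  assumes wf: "wf_cfg G"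
    and inv: "inductive_invariant G Inv"
begin

lemma Inv_states: "\<sigma> \<in> Inv \<Longrightarrow> \<sigma> \<in> states G"
  using inv unfolding inductive_invariant_def by auto

lemma Inv_locs: "\<sigma> \<in> Inv \<Longrightarrow> fst \<sigma> \<in> locs G"
  using Inv_states unfolding states_def by simp

lemma succs_Inv: "\<sigma> \<in> Inv \<Longrightarrow> \<sigma>' \<in> succs G \<sigma> \<Longrightarrow> \<sigma>' \<in> Inv"
  using inv unfolding inductive_invariant_def by auto

lemma le_Min_succs_iff:
  "\<sigma> \<in> Inv \<Longrightarrow> c \<le> Min (w ` succs G \<sigma>) \<longleftrightarrow> (\<forall>\<sigma>'\<in>succs G \<sigma>. c \<le> w \<sigma>')"
  using finite_succs[OF wf] succs_nonempty[OF wf Inv_states] by simp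

lemma Min_succs_le: "\<sigma>' \<in> succs G \<sigma> \<Longrightarrow> Min (w ` succs G \<sigma>) \<le> w \<sigma>'"
  using finite_succs[OF wf] by simp

lemma reach_bounds:
  assumes "valid_sched G s" "\<pi> \<noteq> []" "last \<pi> \<in> Inv"
  shows "0 \<le> reach G s n \<pi> \<and> reach G s n \<pi> \<le> 1"
  using assms(2,3)
proof (induction n arbitrary: \<pi>)
  case 0
  then show ?case by simp
next
  case (Suc n)
  have IH: "0 \<le> reach G s n (\<pi> @ [\<sigma>']) \<and> reach G s n (\<pi> @ [\<sigma>']) \<le> 1"
    if "\<sigma>' \<in> succs G (last \<pi>)" for \<sigma>'
    using Suc.IH succs_Inv[OF Suc.prems(2) that] by simp
  consider "last \<pi> = term_state G" | "last \<pi> \<noteq> term_state G" "kind G (fst (last \<pi>)) = Prob"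
    | "last \<pi> \<noteq> term_state G" "kind G (fst (last \<pi>)) \<noteq> Prob"
    by blast
  then show ?case
  proof cases
    case 1
    then show ?thesis by (simp add: reach_term)
  next
    case 2
    have "expectation G (\<lambda>_. 0) (last \<pi>) \<le> expectation G (\<lambda>\<sigma>'. reach G s n (\<pi> @ [\<sigma>'])) (last \<pi>)"
      "expectation G (\<lambda>\<sigma>'. reach G s n (\<pi> @ [\<sigma>'])) (last \<pi>) \<le> expectation G (\<lambda>_. 1) (last \<pi>)"
      using IH by (auto intro!: expectation_mono wf 2)
    then show ?thesis
      unfolding reach_Suc_Prob[OF 2]
      using 2 Inv_locs[OF Suc.prems(2)] by (simp add: expectation_const wf)
  next
    case 3
    then obtain \<sigma>' where "\<sigma>' \<in> succs G (last \<pi>)" "reach G s (Suc n) \<pi> = reach G s n (\<pi> @ [\<sigma>'])"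
      using reach_Suc_not_Prob[OF wf assms(1) Suc.prems(1) Inv_states[OF Suc.prems(2)]] by blast
    then show ?thesis using IH by simp
  qed
qed

lemma min_reach_step_affine:
  assumes "0 \<le> a" "a + b \<le> 1" "\<forall>\<sigma>\<in>Inv. a * w' \<sigma> + b \<le> w \<sigma>"
  shows "\<forall>\<sigma>\<in>Inv. a * min_reach_step G T w' \<sigma> + b \<le> min_reach_step G T w \<sigma>"
proof
  fix \<sigma> assume \<sigma>: "\<sigma> \<in> Inv"
  have succ: "a * w' \<sigma>' + b \<le> w \<sigma>'" if "\<sigma>' \<in> succs G \<sigma>" for \<sigma>'
    using assms(3) succs_Inv[OF \<sigma> that] by blast
  consider "\<sigma> \<in> T" | "\<sigma> \<notin> T" "kind G (fst \<sigma>) = Prob" | "\<sigma> \<notin> T" "kind G (fst \<sigma>) \<noteq> Prob"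
    by blast
  then show "a * min_reach_step G T w' \<sigma> + b \<le> min_reach_step G T w \<sigma>"
  proof cases
    case 1
    then show ?thesis using assms(2) by (simp add: min_reach_step_def)
  next
    case 2
    have "a * expectation G w' \<sigma> + b = expectation G (\<lambda>\<sigma>'. a * w' \<sigma>' + b * 1) \<sigma>"
      using expectation_lincomb[of G a w' b "\<lambda>_. 1" \<sigma>] expectation_const[OF wf Inv_locs[OF \<sigma>] 2(2)]
      by simp
    also have "\<dots> \<le> expectation G w \<sigma>"
      using succ by (simp add: expectation_mono wf 2)
    finally show ?thesis using 2 by (simp add: min_reach_step_def)
  next
    case 3
    have "a * Min (w' ` succs G \<sigma>) + b \<le> w \<sigma>'" if "\<sigma>' \<in> succs G \<sigma>" for \<sigma>'
    proof -
      have "a * Min (w' ` succs G \<sigma>) \<le> a * w' \<sigma>'"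
        using Min_succs_le[OF that] assms(1) by (rule mult_left_mono)
      then show ?thesis using succ[OF that] by linarith
    qed
    then have "a * Min (w' ` succs G \<sigma>) + b \<le> Min (w ` succs G \<sigma>)"
      using le_Min_succs_iff[OF \<sigma>] by blast
    then show ?thesis using 3 by (simp add: min_reach_step_def)
  qed
qed

lemma min_reach_step_funpow_affine:
  assumes "0 \<le> a" "a + b \<le> 1" "\<forall>\<sigma>\<in>Inv. a * w' \<sigma> + b \<le> w \<sigma>"
  shows "\<forall>\<sigma>\<in>Inv. a * (min_reach_step G T ^^ n) w' \<sigma> + b \<le> (min_reach_step G T ^^ n) w \<sigma>"
  by (induction n) (simp_all add: assms min_reach_step_affine[OF assms(1,2)])

lemma min_reach_nonneg: "\<sigma> \<in> Inv \<Longrightarrow> 0 \<le> min_reach G T n \<sigma>"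
  using min_reach_step_funpow_affine[where a = 0 and b = 0 and w = "\<lambda>\<sigma>. of_bool (\<sigma> \<in> T)" and T = T]
  by (simp add: min_reach_def)

lemma min_reach_ge_power:
  fixes U :: "('l, 'v) state \<Rightarrow> nat"
  assumes \<epsilon>: "0 < \<epsilon>" "\<epsilon> \<le> 1"
    and U_dec: "\<forall>\<sigma>\<in>Inv - T. kind G (fst \<sigma>) \<noteq> Prob \<longrightarrow> (\<forall>\<sigma>'\<in>succs G \<sigma>. U \<sigma>' < U \<sigma>)"
    and U_prob: "\<forall>l x. (l, x) \<in> Inv - T \<and> kind G l = Prob \<longrightarrow>
                   \<epsilon> \<le> (\<Sum>t\<in>{t \<in> enabled G l x. U (post G t x) < U (l, x)}. prb G t x)"
  shows "\<sigma> \<in> Inv \<Longrightarrow> U \<sigma> \<le> m \<Longrightarrow> \<epsilon> ^ m \<le> min_reach G T m \<sigma>"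
proof (induction m arbitrary: \<sigma>)
  case 0
  obtain l x where lx: "\<sigma> = (l, x)" by fastforce
  have False if "\<sigma> \<notin> T"
  proof (cases "kind G l = Prob")
    case True
    have "\<epsilon> \<le> (\<Sum>t\<in>{t \<in> enabled G l x. U (post G t x) < U (l, x)}. prb G t x)"
      using U_prob 0(1) lx that True by blast
    moreover have "{t \<in> enabled G l x. U (post G t x) < U (l, x)} = {}"
      using 0(2) lx by simp
    ultimately show False using \<epsilon>(1) by simp
  next
    case False
    obtain \<sigma>' where "\<sigma>' \<in> succs G \<sigma>"
      using succs_nonempty[OF wf Inv_states[OF 0(1)]] by blast
    with U_dec 0(1) lx that False have "U \<sigma>' < U \<sigma>" by auto
    with 0(2) show False by simp
  qed
  then have "\<sigma> \<in> T" by blast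
  then show ?case by (simp add: min_reach_target)
next
  case (Suc m)
  have IH: "\<epsilon> ^ m \<le> min_reach G T m \<sigma>'" if "\<sigma>' \<in> succs G \<sigma>" "U \<sigma>' < U \<sigma>" for \<sigma>'
    using Suc.IH succs_Inv[OF Suc.prems(1) that(1)] that(2) Suc.prems(2) by simp
  obtain l x where lx: "\<sigma> = (l, x)" by fastforce
  consider "\<sigma> \<in> T" | "\<sigma> \<notin> T" "kind G l = Prob" | "\<sigma> \<notin> T" "kind G l \<noteq> Prob"
    by blast
  then show ?case
  proof cases
    case 1
    have "\<epsilon> ^ Suc m \<le> 1"
      using \<epsilon> by (intro power_le_one) auto
    with 1 show ?thesis by (simp add: min_reach_target)
  next
    case 2
    let ?D = "{t \<in> enabled G l x. U (post G t x) < U (l, x)}"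
    have "\<epsilon> \<le> (\<Sum>t\<in>?D. prb G t x)"
      using U_prob Suc.prems(1) lx 2 by blast
    then have "\<epsilon> ^ Suc m \<le> \<epsilon> ^ m * (\<Sum>t\<in>?D. prb G t x)"
      unfolding power_Suc2 using \<epsilon>(1) by (intro mult_left_mono) auto
    also have "\<dots> = expectation G (\<lambda>\<sigma>'. \<epsilon> ^ m * of_bool (U \<sigma>' < U \<sigma>)) \<sigma>"
      unfolding expectation_def lx
      by (auto simp: sum.inter_filter finite_enabled wf sum_distrib_left intro!: sum.cong)
    also have "\<dots> \<le> expectation G (min_reach G T m) \<sigma>"
      using IH min_reach_nonneg[OF succs_Inv[OF Suc.prems(1)]] 2 lx
      by (intro expectation_mono wf) auto
    finally show ?thesis using 2 lx by (simp add: min_reach_Suc min_reach_step_def)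
  next
    case 3
    have "\<epsilon> ^ Suc m \<le> \<epsilon> ^ m"
      using \<epsilon> by (simp add: power_decreasing)
    also have "\<dots> \<le> Min (min_reach G T m ` succs G \<sigma>)"
    proof -
      have "\<forall>\<sigma>'\<in>succs G \<sigma>. U \<sigma>' < U \<sigma>"
        using U_dec Suc.prems(1) 3 lx by auto
      then show ?thesis
        unfolding le_Min_succs_iff[OF Suc.prems(1)] using IH by blast
    qed
    finally show ?thesis using 3 lx by (simp add: min_reach_Suc min_reach_step_def)
  qed
qed

lemma min_reach_mult_ge:
  assumes c: "c \<le> 1" and B: "\<forall>\<sigma>\<in>Inv - T. c \<le> min_reach G T B \<sigma>"
  shows "\<sigma> \<in> Inv \<Longrightarrow> 1 - (1 - c) ^ k \<le> min_reach G T (k * B) \<sigma>"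
proof (induction k arbitrary: \<sigma>)
  case 0
  then show ?case by (simp add: min_reach_0)
next
  case (Suc k)
  have "\<forall>\<sigma>\<in>Inv. (1 - c) * min_reach G T 0 \<sigma> + c \<le> min_reach G T B \<sigma>"
    using B by (auto simp: min_reach_0 min_reach_target)
  then have "\<forall>\<sigma>\<in>Inv. (1 - c) * min_reach G T (k * B + 0) \<sigma> + c \<le> min_reach G T (k * B + B) \<sigma>"
    unfolding min_reach_add using c by (intro min_reach_step_funpow_affine) auto
  then have "(1 - c) * min_reach G T (k * B) \<sigma> + c \<le> min_reach G T (Suc k * B) \<sigma>"
    using Suc.prems by (simp add: add.commute)
  moreover have "(1 - c) * (1 - (1 - c) ^ k) \<le> (1 - c) * min_reach G T (k * B) \<sigma>"
    using Suc c by (simp add: mult_left_mono)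
  ultimately show ?case by (simp add: algebra_simps)
qed

lemma min_reach_stop_set_uniform:
  fixes U :: "('l, 'v) state \<Rightarrow> nat"
  assumes U_dec: "\<forall>\<sigma>\<in>Inv. \<sigma> \<noteq> term_state G \<and> kind G (fst \<sigma>) \<noteq> Prob \<longrightarrow>
                    (\<forall>\<sigma>'\<in>succs G \<sigma>. U \<sigma> > U \<sigma>')"
    and U_bdd: "\<exists>B. \<forall>\<sigma>\<in>Inv. V \<sigma> \<le> r \<longrightarrow> U \<sigma> \<le> B"
    and U_prob: "\<exists>\<epsilon>>0. \<forall>l x. (l, x) \<in> Inv \<and> V (l, x) \<le> r \<and> (l, x) \<noteq> term_state G \<and> kind G l = Prob \<longrightarrow>
                    (\<Sum>t\<in>{t \<in> enabled G l x. U (post G t x) < U (l, x)}. prb G t x) > \<epsilon>"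
  shows "\<exists>B c. 0 < c \<and> c \<le> 1 \<and> (\<forall>\<sigma>\<in>Inv - stop_set G V r. c \<le> min_reach G (stop_set G V r) B \<sigma>)"
proof -
  obtain B where B: "\<forall>\<sigma>\<in>Inv. V \<sigma> \<le> r \<longrightarrow> U \<sigma> \<le> B"
    using U_bdd by blast
  obtain \<epsilon> where \<epsilon>: "0 < \<epsilon>" and \<epsilon>_prob: "\<forall>l x. (l, x) \<in> Inv \<and> V (l, x) \<le> r \<and>
      (l, x) \<noteq> term_state G \<and> kind G l = Prob \<longrightarrow>
      (\<Sum>t\<in>{t \<in> enabled G l x. U (post G t x) < U (l, x)}. prb G t x) > \<epsilon>"
    using U_prob by blast
  let ?\<epsilon> = "min \<epsilon> 1"
  have "?\<epsilon> ^ B \<le> min_reach G (stop_set G V r) B \<sigma>" if "\<sigma> \<in> Inv - stop_set G V r" for \<sigma>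
  proof (rule min_reach_ge_power)
    show "\<forall>\<sigma>\<in>Inv - stop_set G V r. kind G (fst \<sigma>) \<noteq> Prob \<longrightarrow> (\<forall>\<sigma>'\<in>succs G \<sigma>. U \<sigma>' < U \<sigma>)"
      using U_dec by (auto simp: stop_set_def)
    show "\<forall>l x. (l, x) \<in> Inv - stop_set G V r \<and> kind G l = Prob \<longrightarrow>
            ?\<epsilon> \<le> (\<Sum>t\<in>{t \<in> enabled G l x. U (post G t x) < U (l, x)}. prb G t x)"
      using \<epsilon>_prob by (fastforce simp: stop_set_def)
    show "U \<sigma> \<le> B"
      using B that by (auto simp: stop_set_def)
  qed (use \<epsilon> that in auto)
  moreover have "0 < ?\<epsilon> ^ B" "?\<epsilon> ^ B \<le> 1"
    using \<epsilon> by (simp_all add: power_le_one)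
  ultimately show ?thesis
    by blast
qed

end

locale cfg_supermartingale = cfg_invariant +
  fixes V :: "('l, 'v) state \<Rightarrow> real"
  assumes sm: "supermartingale G Inv V"
    and V_term: "V (term_state G) = 0"
    and V_nonneg: "\<forall>\<sigma>\<in>Inv. 0 \<le> V \<sigma>"
begin

lemma expectation_V_le:
  "\<sigma> \<in> Inv \<Longrightarrow> \<sigma> \<noteq> term_state G \<Longrightarrow> kind G (fst \<sigma>) = Prob \<Longrightarrow> expectation G V \<sigma> \<le> V \<sigma>"
  using sm unfolding supermartingale_def expectation_def by auto

lemma V_succs_le:
  "\<sigma> \<in> Inv \<Longrightarrow> \<sigma> \<noteq> term_state G \<Longrightarrow> kind G (fst \<sigma>) \<noteq> Prob \<Longrightarrow> \<sigma>' \<in> succs G \<sigma> \<Longrightarrow> V \<sigma>' \<le> V \<sigma>"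
  using sm unfolding supermartingale_def by auto

lemma reach_ge_min_reach_stopped:
  assumes r: "0 < r" and s: "valid_sched G s"
    and \<pi>: "\<pi> \<noteq> []" "last \<pi> \<in> Inv" and stopped: "last \<pi> \<in> stop_set G V r"
  shows "min_reach G (stop_set G V r) n (last \<pi>) - V (last \<pi>) / r \<le> reach G s n \<pi>"
proof (cases "last \<pi> = term_state G")
  case True
  then show ?thesis using V_term by (simp add: reach_term stop_set_def min_reach_target)
next
  case False
  then have "min_reach G (stop_set G V r) n (last \<pi>) - V (last \<pi>) / r \<le> 0"
    using stopped r by (simp add: min_reach_target stop_set_def)
  then show ?thesis using reach_bounds[OF s \<pi>, of n] by linarith
qed

lemma reach_ge_min_reach:
  assumes r: "0 < r" and s: "valid_sched G s"
  shows "\<pi> \<noteq> [] \<Longrightarrow> last \<pi> \<in> Inv \<Longrightarrow>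
    min_reach G (stop_set G V r) n (last \<pi>) - V (last \<pi>) / r \<le> reach G s n \<pi>"
proof (induction n arbitrary: \<pi>)
  case (0 \<pi>)
  show ?case
  proof (cases "last \<pi> \<in> stop_set G V r")
    case True
    with reach_ge_min_reach_stopped[OF r s 0] show ?thesis .
  next
    case False
    have "0 \<le> V (last \<pi>) / r"
      using V_nonneg 0 r by simp
    with False show ?thesis
      using reach_bounds[OF s 0, of 0] by (simp add: min_reach_0)
  qed
next
  case (Suc n \<pi>)
  define \<sigma> where "\<sigma> = last \<pi>"
  have \<sigma>: "\<sigma> \<in> Inv" using Suc.prems \<sigma>_def by simp
  have IH: "min_reach G (stop_set G V r) n \<sigma>' - V \<sigma>' / r \<le> reach G s n (\<pi> @ [\<sigma>'])"
    if "\<sigma>' \<in> succs G \<sigma>" for \<sigma>'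
    using Suc.IH[of "\<pi> @ [\<sigma>']"] succs_Inv[OF \<sigma> that] by simp
  consider "\<sigma> \<in> stop_set G V r" | "\<sigma> \<notin> stop_set G V r" "kind G (fst \<sigma>) = Prob"
    | "\<sigma> \<notin> stop_set G V r" "kind G (fst \<sigma>) \<noteq> Prob"
    by blast
  then show ?case
  proof cases
    case 1
    then show ?thesis using reach_ge_min_reach_stopped[OF r s Suc.prems] unfolding \<sigma>_def by blast
  next
    case 2
    have "min_reach G (stop_set G V r) (Suc n) \<sigma> - V \<sigma> / r
        \<le> expectation G (min_reach G (stop_set G V r) n) \<sigma> - expectation G V \<sigma> / r"
      using 2 expectation_V_le[OF \<sigma>] r
      by (auto simp: min_reach_Suc min_reach_step_def stop_set_def divide_right_mono)
    also have "\<dots> = expectation G (\<lambda>\<sigma>'. 1 * min_reach G (stop_set G V r) n \<sigma>' + (- 1 / r) * V \<sigma>') \<sigma>"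
      unfolding expectation_lincomb by simp
    also have "\<dots> \<le> expectation G (\<lambda>\<sigma>'. reach G s n (\<pi> @ [\<sigma>'])) \<sigma>"
      using IH 2 by (intro expectation_mono wf) auto
    also have "\<dots> = reach G s (Suc n) \<pi>"
      using 2 unfolding \<sigma>_def stop_set_def by (intro reach_Suc_Prob[symmetric]) auto
    finally show ?thesis using \<sigma>_def by simp
  next
    case 3
    then obtain \<sigma>' where \<sigma>': "\<sigma>' \<in> succs G \<sigma>" "reach G s (Suc n) \<pi> = reach G s n (\<pi> @ [\<sigma>'])"
      using reach_Suc_not_Prob[OF wf s Suc.prems(1) Inv_states] Suc.prems(2) \<sigma>_def
      by (metis insertCI stop_set_def)
    have "min_reach G (stop_set G V r) (Suc n) \<sigma> \<le> min_reach G (stop_set G V r) n \<sigma>'"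
      using 3 \<sigma>'(1) by (simp add: min_reach_Suc min_reach_step_def Min_succs_le)
    moreover have "V \<sigma>' / r \<le> V \<sigma> / r"
      using V_succs_le[OF \<sigma> _ 3(2) \<sigma>'(1)] 3(1) r by (simp add: stop_set_def divide_right_mono)
    ultimately show ?thesis using IH[OF \<sigma>'(1)] \<sigma>'(2) \<sigma>_def by simp
  qed
qed

lemma ex_reach_gt:
  assumes unif: "\<forall>r>0. \<exists>B c. 0 < c \<and> c \<le> 1 \<and>
                   (\<forall>\<sigma>\<in>Inv - stop_set G V r. c \<le> min_reach G (stop_set G V r) B \<sigma>)"
    and \<sigma>: "\<sigma> \<in> Inv" and s: "valid_sched G s" and \<delta>: "0 < \<delta>"
  shows "\<exists>n. 1 - \<delta> < reach G s n [\<sigma>]"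
proof -
  define r where "r = 2 * (V \<sigma> + 1) / \<delta>"
  have V: "0 \<le> V \<sigma>"
    using V_nonneg \<sigma> by blast
  have r: "0 < r"
    using V \<delta> unfolding r_def by (intro divide_pos_pos) auto
  have "V \<sigma> / r = \<delta> / 2 * (V \<sigma> / (V \<sigma> + 1))"
    using V \<delta> by (simp add: r_def field_simps)
  also have "\<dots> < \<delta> / 2 * 1"
    using V \<delta> by (intro mult_strict_left_mono) auto
  finally have Vr: "V \<sigma> / r < \<delta> / 2" by simp
  obtain B c where c: "0 < c" "c \<le> 1"
    and B: "\<forall>\<sigma>\<in>Inv - stop_set G V r. c \<le> min_reach G (stop_set G V r) B \<sigma>"
    using unif r by blast
  obtain k where k: "(1 - c) ^ k < \<delta> / 2"
    using real_arch_pow_inv[of "\<delta> / 2" "1 - c"] \<delta> c(1) by auto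
  have "1 - (1 - c) ^ k - V \<sigma> / r \<le> reach G s (k * B) [\<sigma>]"
    using min_reach_mult_ge[OF c(2) B \<sigma>, of k] reach_ge_min_reach[OF r s, of "[\<sigma>]" "k * B"] \<sigma>
    by simp
  then show ?thesis
    using k Vr by (intro exI[of _ "k * B"]) linarith
qed

end

lemma term_prob_sched_eq_1I:
  assumes le_1: "\<And>n. reach G s n [(l_init G, x_init G)] \<le> 1"
    and gt: "\<And>\<delta>. 0 < \<delta> \<Longrightarrow> \<exists>n. 1 - \<delta> < reach G s n [(l_init G, x_init G)]"
  shows "term_prob_sched G s = 1"
  unfolding term_prob_sched_def
proof (rule antisym)
  show "(SUP n. reach G s n [(l_init G, x_init G)]) \<le> 1"
    using le_1 by (rule cSUP_least[OF UNIV_not_empty])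
  have bdd: "bdd_above (range (\<lambda>n. reach G s n [(l_init G, x_init G)]))"
    using le_1 by (intro bdd_aboveI2)
  show "1 \<le> (SUP n. reach G s n [(l_init G, x_init G)])"
  proof (rule field_le_epsilon)
    fix \<delta> :: real assume "0 < \<delta>"
    then obtain n where "1 - \<delta> < reach G s n [(l_init G, x_init G)]"
      using gt by blast
    moreover have "reach G s n [(l_init G, x_init G)] \<le> (SUP n. reach G s n [(l_init G, x_init G)])"
      using bdd by (rule cSUP_upper[OF UNIV_I])
    ultimately show "1 \<le> (SUP n. reach G s n [(l_init G, x_init G)]) + \<delta>"
      by linarith
  qed
qed

lemma Pr_term_eq_1I:
  assumes "wf_cfg G" "\<And>s. valid_sched G s \<Longrightarrow> term_prob_sched G s = 1"
  shows "Pr_term G = 1"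
proof -
  have "{s. valid_sched G s} \<noteq> {}"
    using valid_sched_exists[OF assms(1)] by blast
  then show ?thesis
    unfolding Pr_term_def using assms(2) by simp
qed

theorem mainTheorem3:
  fixes G :: "('l, 'v::finite) cfg"
    and Inv :: "('l, 'v) state set"
    and V :: "('l, 'v) state \<Rightarrow> real"
    and U :: "('l, 'v) state \<Rightarrow> nat"
  assumes wf: "wf_cfg G"
    and inv: "inductive_invariant G Inv"
    and init: "(l_init G, x_init G) \<in> Inv"
    and sm: "supermartingale G Inv V"
    and V_term: "V (term_state G) = 0"
    and V_pos: "\<forall>\<sigma>\<in>Inv. \<sigma> \<noteq> term_state G \<longrightarrow> V \<sigma> > 0"
    and U_term: "U (term_state G) = 0"
    and U_dec: "\<forall>\<sigma>\<in>Inv. \<sigma> \<noteq> term_state G \<and> kind G (fst \<sigma>) \<noteq> Prob \<longrightarrow>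
                  (\<forall>\<sigma>'\<in>succs G \<sigma>. U \<sigma> > U \<sigma>')"
    and U_bdd: "\<forall>r::real. \<exists>B::nat. \<forall>\<sigma>\<in>Inv. V \<sigma> \<le> r \<longrightarrow> U \<sigma> \<le> B"
    and U_prob: "\<forall>r::real. \<exists>\<epsilon>>0. \<forall>l x. (l, x) \<in> Inv \<and> V (l, x) \<le> r \<and>
                  (l, x) \<noteq> term_state G \<and> kind G l = Prob \<longrightarrow>
                  (\<Sum>t\<in>{t \<in> enabled G l x. U (post G t x) < U (l, x)}. prb G t x) > \<epsilon>"
  shows "Pr_term G = 1"
proof -
  have "\<forall>\<sigma>\<in>Inv. 0 \<le> V \<sigma>"
    using V_pos V_term by (metis less_imp_le order.refl)
  then interpret cfg_supermartingale G Inv V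
    using wf inv sm V_term by unfold_locales
  have unif: "\<forall>r>0. \<exists>B c. 0 < c \<and> c \<le> 1 \<and>
                (\<forall>\<sigma>\<in>Inv - stop_set G V r. c \<le> min_reach G (stop_set G V r) B \<sigma>)"
    using min_reach_stop_set_uniform[OF U_dec] U_bdd U_prob by blast
  have "term_prob_sched G s = 1" if s: "valid_sched G s" for s
    using reach_bounds[OF s, of "[(l_init G, x_init G)]"] init ex_reach_gt[OF unif init s]
    by (intro term_prob_sched_eq_1I) auto
  with wf show ?thesis
    by (rule Pr_term_eq_1I)
qed

end
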